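(* Let $K$ be a compact metric space and $(f_j)$ a uniformly bounded sequence of continuous complex-valued functions on $K$ converging pointwise to a function $f$; put $\varphi=\mathrm{Re}\, f$. Let $\alpha$ be a countable ordinal and $x\in K$ with $0<v_\alpha(\varphi)(x)=:\lambda<\infty$. Let $\mathcal U$ be an open neighborhood of $x$ and $0<\eta<1$. Then there is a subsequence $(b_j)$ of $(f_j)$ with the following property: for every strictly increasing sequence of integers $1=m_1<m_2<\cdots$ there exist an integer $k$, points $x_1,\dots,x_{2k-1},x_{2k}=:t$ in $\mathcal U$, and positive numbers $\delta_1,\dots,\delta_k$ such that (1) $\varphi(x_{2j})-\varphi(x_{2j-1})>(1-\eta)\delta_j$ for all $1\le j\le k$; (2) $(1+\eta)\lambda>\sum_{j=1}^k\delta_j>(1-\eta)\lambda$; (3) $\sum_{m_j\le i<m_{j+1}}|b_i(t)-f(x_j)|<\eta\,\delta_{\lfloor (j+1)/2\rfloor}$ for all $1\le j\le 2k-1$; (4) $\sum_{i\ge m_{2k}}|b_i(t)-f(t)|<\eta\,\delta_k$.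
   Context: For $g:K\to[-\infty,\infty]$, $Ug(x)=\limsup_{y\to x}g(y)=\inf_U\sup g(U)$ over open neighborhoods $U$ of $x$ (non-exclusive limsup). For real $\varphi:K\to\mathbb{R}$ the positive transfinite oscillations are defined by transfinite induction: $v_0(\varphi)\equiv0$; $\widetilde v_{\alpha+1}(\varphi)(x)=\limsup_{y\to x}(\varphi(y)-\varphi(x)+v_\alpha(\varphi)(y))$; for limit $\beta$, $\widetilde v_\beta(\varphi)=\sup_{\alpha<\beta}v_\alpha(\varphi)$; and $v_\beta(\varphi)=U\widetilde v_\beta(\varphi)$ (values in $[0,\infty]$). *)

theory Defs
  imports "HOL-Analysis.Analysis" "HOL-Library.Extended_Real"
begin

definition usc_env :: "'a::metric_space set \<Rightarrow> ('a \<Rightarrow> ereal) \<Rightarrow> 'a \<Rightarrow> ereal" where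
  "usc_env K g x = (INF V\<in>{V. open V \<and> x \<in> V}. SUP y\<in>V \<inter> K. g y)"

definition osc_step :: "'a::metric_space set \<Rightarrow> ('a \<Rightarrow> real) \<Rightarrow> ('o::wellorder \<Rightarrow> 'a \<Rightarrow> ereal)
     \<Rightarrow> 'o \<Rightarrow> 'a \<Rightarrow> ereal" where
  "osc_step K \<phi> v a =
     (if \<forall>b. \<not> b < a then (\<lambda>x. 0)
      else if \<exists>b. b < a \<and> (\<forall>c. c < a \<longrightarrow> c \<le> b) then
        (let b = (THE b. b < a \<and> (\<forall>c. c < a \<longrightarrow> c \<le> b))
         in (\<lambda>x. usc_env K (\<lambda>y. ereal (\<phi> y - \<phi> x) + v b y) x))
      else (\<lambda>x. SUP b\<in>{b. b < a}. v b x))"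

text \<open>Positive transfinite oscillation v_a(phi), indexed by elements a of a
  well-ordered type (a represents the ordinal type of {b. b < a}).
  v_0 = 0, and v_a = U (tilde v_a) otherwise.\<close>
definition pos_osc :: "'a::metric_space set \<Rightarrow> ('a \<Rightarrow> real) \<Rightarrow> 'o::wellorder \<Rightarrow> 'a \<Rightarrow> ereal" where
  "pos_osc K \<phi> = wfrec {(b, a). b < a}
     (\<lambda>v a. if \<forall>b. \<not> b < a then (\<lambda>x. 0) else usc_env K (osc_step K \<phi> v a))"

end

theory Submission
  imports Defs
begin

text \<open>Write v_b for the oscillation at stage b. If 0 \<le> c < v_b(y), the recursion yields
  arbitrarily close to y a point z and a stage b' < b with
  limsup_{w\<rightarrow>z} (\<phi> w - \<phi> z + v_b'(w)) > c; taking the least such stage also gives v_b' \<le> c near z.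
  Hence every w near z realising that limsup up to a margin \<kappa> makes a genuine jump
  \<phi> w - \<phi> z > \<kappa>, and the part of c still missing stays below v_b'(w). Alternating these
  two moves is a game in which the stages strictly decrease, so it stops after finitely many
  jumps, whose sum ends up between lo < v_\<alpha>(x) and hi > v_\<alpha>(x) (upper semicontinuity keeps
  the gains below hi). Every move can be made inside any prescribed open set. The subsequence
  is chosen diagonally: f (r i) approximates g within tol/2^i at the finitely many positions
  the strategy can reach with block endpoints \<le> i, and before each move the open set is shrunk
  so that the block sums of |f (r i) w - f (r i) z| stay small; the last point t inherits all
  block estimates.\<close>

section \<open>Unfolding the transfinite oscillation\<close>

definition successor_of :: "'o::wellorder \<Rightarrow> 'o \<Rightarrow> bool" where
  "successor_of a b \<longleftrightarrow> b < a \<and> (\<forall>c. c < a \<longrightarrow> c \<le> b)"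

definition osc_gain :: "'a::metric_space set \<Rightarrow> ('a \<Rightarrow> real) \<Rightarrow> 'o::wellorder \<Rightarrow> 'a \<Rightarrow> 'a \<Rightarrow> ereal" where
  "osc_gain K \<phi> b z w = ereal (\<phi> w - \<phi> z) + pos_osc K \<phi> b w"

lemma successor_of_the:
  assumes "successor_of a b"
  shows "(THE b. b < a \<and> (\<forall>c. c < a \<longrightarrow> c \<le> b)) = b"
  using assms unfolding successor_of_def by (intro the_equality) (auto intro: antisym)

lemma osc_step_cong:
  assumes "\<And>b. b < a \<Longrightarrow> v b = w b"
  shows "osc_step K \<phi> v a = osc_step K \<phi> w a"
proof -
  have "(SUP b\<in>{b. b < a}. v b y) = (SUP b\<in>{b. b < a}. w b y)" for y
    using assms by (intro SUP_cong) auto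
  moreover have "(THE b. b < a \<and> (\<forall>c. c < a \<longrightarrow> c \<le> b)) < a"
    if "successor_of a b" for b
    using successor_of_the[OF that] that unfolding successor_of_def by simp
  ultimately show ?thesis
    using assms unfolding osc_step_def Let_def successor_of_def by auto
qed

lemma pos_osc_eq:
  fixes K :: "'a::metric_space set" and a :: "'o::wellorder"
  shows "pos_osc K \<phi> a =
     (if \<forall>b. \<not> b < a then (\<lambda>x. 0) else usc_env K (osc_step K \<phi> (pos_osc K \<phi>) a))"
proof -
  define F where "F v a = (if \<forall>b::'o. \<not> b < a then (\<lambda>x::'a. 0::ereal)
    else usc_env K (osc_step K \<phi> v a))" for v a
  have "adm_wf {(b, a). b < a} F"
    unfolding adm_wf_def
  proof (intro allI impI)
    fix v w :: "'o \<Rightarrow> 'a \<Rightarrow> ereal" and a :: 'o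
    assume "\<forall>b. (b, a) \<in> {(b, a). b < a} \<longrightarrow> v b = w b"
    then have "osc_step K \<phi> v a = osc_step K \<phi> w a" by (intro osc_step_cong) simp
    then show "F v a = F w a" unfolding F_def by simp
  qed
  from wfrec_fixpoint[OF wf this] have "pos_osc K \<phi> = F (pos_osc K \<phi>)"
    unfolding pos_osc_def F_def by simp
  from fun_cong[OF this, of a] show ?thesis by (simp only: F_def)
qed

lemma pos_osc_bottom: "\<forall>b. \<not> b < a \<Longrightarrow> pos_osc K \<phi> a = (\<lambda>x. 0)"
  by (subst pos_osc_eq) simp

lemma pos_osc_eq_usc_env: "b < a \<Longrightarrow> pos_osc K \<phi> a = usc_env K (osc_step K \<phi> (pos_osc K \<phi>) a)"
  by (subst pos_osc_eq) auto

lemma osc_step_successor: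
  "successor_of a b \<Longrightarrow> osc_step K \<phi> (pos_osc K \<phi>) a z = usc_env K (osc_gain K \<phi> b z) z"
  using successor_of_the[of a b] unfolding osc_step_def successor_of_def osc_gain_def Let_def
  by (auto simp: fun_eq_iff)

lemma osc_step_limit:
  "b < a \<Longrightarrow> \<nexists>b. successor_of a b \<Longrightarrow> osc_step K \<phi> v a = (\<lambda>x. SUP b\<in>{b. b < a}. v b x)"
  unfolding osc_step_def successor_of_def by auto

lemma usc_env_ge: "x \<in> K \<Longrightarrow> g x \<le> usc_env K g x"
  unfolding usc_env_def by (auto intro!: INF_greatest SUP_upper)

lemma usc_env_le_SUP: "open V \<Longrightarrow> x \<in> V \<Longrightarrow> usc_env K g x \<le> (SUP y\<in>V \<inter> K. g y)"
  unfolding usc_env_def by (auto intro!: INF_lower)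

lemma usc_env_lessE:
  assumes "usc_env K g x < M"
  obtains V where "open V" "x \<in> V" "(SUP y\<in>V \<inter> K. g y) < M"
  using assms unfolding usc_env_def by (auto simp: INF_less_iff)

lemma less_usc_envE:
  assumes "c < usc_env K g x" "open V" "x \<in> V"
  obtains y where "y \<in> V \<inter> K" "c < g y"
  using less_le_trans[OF assms(1) usc_env_le_SUP[OF assms(2,3)]] by (auto simp: less_SUP_iff)

lemma usc_env_upper_semicontinuous:
  assumes "usc_env K g x < M"
  obtains V where "open V" "x \<in> V" "\<And>w. w \<in> V \<Longrightarrow> usc_env K g w < M"
  by (rule usc_env_lessE[OF assms]) (use usc_env_le_SUP le_less_trans in metis)

lemma pos_osc_upper_semicontinuous:
  assumes "pos_osc K \<phi> a x < M"
  obtains V where "open V" "x \<in> V" "\<And>w. w \<in> V \<Longrightarrow> pos_osc K \<phi> a w < M"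
proof (cases "\<exists>b. b < a")
  case True
  then obtain b where "b < a" by blast
  with assms that show thesis
    unfolding pos_osc_eq_usc_env[OF \<open>b < a\<close>] by (auto elim: usc_env_upper_semicontinuous)
next
  case False
  with assms show thesis using that[of UNIV] by (simp add: pos_osc_bottom)
qed

lemma usc_env_between:
  assumes "ereal c < usc_env K g z" "usc_env K g z < ereal B"
  obtains \<kappa> P where "0 < \<kappa>" "ereal (c + \<kappa>) < usc_env K g z" "open P" "z \<in> P"
    "\<And>w. w \<in> P \<inter> K \<Longrightarrow> g w < ereal B"
proof -
  obtain u where u: "usc_env K g z = ereal u"
    using assms by (cases "usc_env K g z") auto
  obtain P where "open P" "z \<in> P" "(SUP w\<in>P \<inter> K. g w) < ereal B"
    using usc_env_lessE[OF assms(2)] by blast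
  moreover have "0 < (u - c) / 2" "ereal (c + (u - c) / 2) < usc_env K g z"
    using assms(1) u by (auto simp: field_simps)
  ultimately show thesis
    using that by (meson SUP_upper le_less_trans)
qed

lemma pos_osc_successor_ge:
  assumes "successor_of a b" "z \<in> K"
  shows "usc_env K (osc_gain K \<phi> b z) z \<le> pos_osc K \<phi> a z"
proof -
  have "b < a" using assms(1) unfolding successor_of_def by simp
  show ?thesis
    unfolding pos_osc_eq_usc_env[OF \<open>b < a\<close>] osc_step_successor[OF assms(1), symmetric]
    by (rule usc_env_ge[OF assms(2)])
qed

lemma pos_osc_mono:
  fixes a a' :: "'o::wellorder"
  assumes "w \<in> K" "a \<le> a'"
  shows "pos_osc K \<phi> a w \<le> pos_osc K \<phi> a' w"
  using assms(2)
proof (induction a' arbitrary: a rule: less_induct)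
  case (less a')
  show ?case
  proof (cases "a = a'")
    case False
    with less.prems have "a < a'" by simp
    have "pos_osc K \<phi> a w \<le> osc_step K \<phi> (pos_osc K \<phi>) a' w"
    proof (cases "\<exists>b. successor_of a' b")
      case True
      then obtain b where b: "successor_of a' b" by blast
      with \<open>a < a'\<close> have "a \<le> b" "b < a'" unfolding successor_of_def by auto
      then have "pos_osc K \<phi> a w \<le> osc_gain K \<phi> b w w"
        using less.IH by (simp add: osc_gain_def)
      also have "\<dots> \<le> osc_step K \<phi> (pos_osc K \<phi>) a' w"
        unfolding osc_step_successor[OF b] by (rule usc_env_ge[OF assms(1)])
      finally show ?thesis .
    next
      case False
      then show ?thesis
        unfolding osc_step_limit[OF \<open>a < a'\<close> False] using \<open>a < a'\<close> by (auto intro: SUP_upper)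
    qed
    also have "\<dots> \<le> pos_osc K \<phi> a' w"
      unfolding pos_osc_eq_usc_env[OF \<open>a < a'\<close>] by (rule usc_env_ge[OF assms(1)])
    finally show ?thesis .
  qed simp
qed

lemma pos_osc_nonneg:
  assumes "w \<in> K"
  shows "0 \<le> pos_osc K \<phi> a w"
proof -
  have "pos_osc K \<phi> (LEAST b. True) w = 0"
    using pos_osc_bottom not_less_Least by (metis (full_types))
  moreover have "(LEAST b. True) \<le> a" by (rule Least_le) simp
  ultimately show ?thesis using pos_osc_mono[OF assms] by metis
qed

lemma pos_osc_gt_reaches_successor:
  fixes a :: "'o::wellorder"
  assumes "0 \<le> c" "open V" "y \<in> V" "ereal c < pos_osc K \<phi> a y"
  shows "\<exists>a'\<le>a. \<exists>b. successor_of a' b \<and> (\<exists>z\<in>V \<inter> K. ereal c < usc_env K (osc_gain K \<phi> b z) z)"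
  using assms(3,4)
proof (induction a arbitrary: y rule: less_induct)
  case (less a)
  obtain b0 where "b0 < a"
    using less.prems(2) assms(1) pos_osc_bottom[of a K \<phi>] by fastforce
  from less.prems obtain z where z: "z \<in> V \<inter> K" "ereal c < osc_step K \<phi> (pos_osc K \<phi>) a z"
    unfolding pos_osc_eq_usc_env[OF \<open>b0 < a\<close>] by (auto elim: less_usc_envE[OF _ assms(2)])
  show ?case
  proof (cases "\<exists>b. successor_of a b")
    case True
    then obtain b where b: "successor_of a b" by blast
    with z have "ereal c < usc_env K (osc_gain K \<phi> b z) z" by (simp add: osc_step_successor)
    with b z(1) show ?thesis by blast
  next
    case False
    with z obtain b where "b < a" "ereal c < pos_osc K \<phi> b z"
      by (auto simp: osc_step_limit[OF \<open>b0 < a\<close> False] less_SUP_iff)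
    with less.IH[of b z] z(1) show ?thesis by (meson IntD1 order.strict_implies_order order_trans)
  qed
qed

text \<open>By minimality of the successor stage, no point of V has oscillation above c at its
  predecessor b.\<close>
lemma pos_osc_gt_least_successor:
  fixes a :: "'o::wellorder"
  assumes "0 \<le> c" "open V" "y \<in> V" "ereal c < pos_osc K \<phi> a y"
  obtains b z where "b < a" "z \<in> V \<inter> K" "ereal c < usc_env K (osc_gain K \<phi> b z) z"
    "usc_env K (osc_gain K \<phi> b z) z \<le> pos_osc K \<phi> a z"
    "\<And>w. w \<in> V \<Longrightarrow> pos_osc K \<phi> b w \<le> ereal c"
proof -
  define S :: "'o set" where "S = {a'. \<exists>b. successor_of a' b \<and>
    (\<exists>z\<in>V \<inter> K. ereal c < usc_env K (osc_gain K \<phi> b z) z)}"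
  define \<rho> where "\<rho> = (LEAST a'. a' \<in> S)"
  obtain a' where "a' \<le> a" "a' \<in> S"
    using pos_osc_gt_reaches_successor[OF assms] unfolding S_def by blast
  then have "\<rho> \<in> S" "\<rho> \<le> a"
    unfolding \<rho>_def by (auto intro: LeastI Least_le order_trans)
  then obtain b z where b: "successor_of \<rho> b" and z: "z \<in> V \<inter> K"
    "ereal c < usc_env K (osc_gain K \<phi> b z) z"
    unfolding S_def by blast
  have "b < \<rho>" using b unfolding successor_of_def by simp
  show thesis
  proof (rule that)
    show "b < a" using \<open>b < \<rho>\<close> \<open>\<rho> \<le> a\<close> by simp
    have "usc_env K (osc_gain K \<phi> b z) z \<le> pos_osc K \<phi> \<rho> z"
      using pos_osc_successor_ge[OF b] z(1) by blast
    also have "\<dots> \<le> pos_osc K \<phi> a z" using pos_osc_mono \<open>\<rho> \<le> a\<close> z(1) by blast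
    finally show "usc_env K (osc_gain K \<phi> b z) z \<le> pos_osc K \<phi> a z" .
    show "pos_osc K \<phi> b w \<le> ereal c" if "w \<in> V" for w
    proof (rule ccontr)
      assume "\<not> pos_osc K \<phi> b w \<le> ereal c"
      then have "ereal c < pos_osc K \<phi> b w" by simp
      from pos_osc_gt_reaches_successor[OF assms(1,2) \<open>w \<in> V\<close> this]
      obtain a'' where "a'' \<le> b" "a'' \<in> S" unfolding S_def by blast
      then have "\<rho> \<le> b" unfolding \<rho>_def by (meson Least_le order_trans)
      with \<open>b < \<rho>\<close> show False by simp
    qed
  qed (use z in auto)
qed

section \<open>The jump game\<close>

text \<open>Even y b D d sits at x_{2j}, reached by the jump d = \<delta>_j, with D the sum of the jumps so
  far and b the current stage; Odd z b \<kappa> D P sits at the base point x_{2j+1} of the next jump,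
  which will exceed \<kappa> and land in P; Stop t d D is the final point t = x_{2k}.\<close>
datatype ('a, 'o) game_state =
    is_Even: Even (pt: 'a) (stage: 'o) (acc: real) (jump: real)
  | is_Odd: Odd (pt: 'a) (stage: 'o) (margin: real) (acc: real) "'a set"
  | is_Stop: Stop (pt: 'a) (jump: real) (acc: real)

locale osc_game =
  fixes K :: "'a::metric_space set" and \<phi> :: "'a \<Rightarrow> real" and lo hi :: real
begin

text \<open>lo - D is what the remaining jumps still have to cover, hi - D what they may add.\<close>
fun valid :: "('a, 'o::wellorder) game_state \<Rightarrow> bool" where
  "valid (Even y b D d) \<longleftrightarrow> y \<in> K \<and> 0 < d \<and> D \<le> lo \<and>
     ereal (lo - D) < pos_osc K \<phi> b y \<and> pos_osc K \<phi> b y < ereal (hi - D)"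
| "valid (Odd z b \<kappa> D P) \<longleftrightarrow> z \<in> K \<and> 0 < \<kappa> \<and> open P \<and> z \<in> P \<and>
     ereal (lo - D + \<kappa>) < usc_env K (osc_gain K \<phi> b z) z \<and>
     (\<forall>y\<in>P \<inter> K. ereal (lo - D + \<kappa>) < osc_gain K \<phi> b z y \<longrightarrow> \<kappa> < \<phi> y - \<phi> z) \<and>
     (\<forall>w\<in>P \<inter> K. osc_gain K \<phi> b z w < ereal (hi - D))"
| "valid (Stop t d D) \<longleftrightarrow> t \<in> K \<and> 0 < d \<and> lo < D \<and> D < hi"

fun step :: "('a, 'o::wellorder) game_state \<Rightarrow> ('a, 'o) game_state \<Rightarrow> bool" where
  "step (Even y b D d) s \<longleftrightarrow> is_Odd s \<and> stage s < b \<and> acc s = D"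
| "step (Odd z b \<kappa> D P) s \<longleftrightarrow> \<not> is_Odd s \<and> jump s = \<phi> (pt s) - \<phi> z \<and> \<kappa> < jump s \<and>
     acc s = D + jump s \<and> (is_Even s \<longrightarrow> stage s = b)"
| "step (Stop t d D) s \<longleftrightarrow> s = Stop t d D"

lemma valid_pt: "valid s \<Longrightarrow> pt s \<in> K"
  by (cases s) auto

lemma valid_margin: "valid s \<Longrightarrow> is_Odd s \<Longrightarrow> 0 < margin s"
  by (cases s) auto

lemma valid_Stop_acc: "valid s \<Longrightarrow> is_Stop s \<Longrightarrow> lo < acc s \<and> acc s < hi"
  by (cases s) auto

lemma step_from_Even:
  fixes b :: "'o::wellorder"
  assumes "valid (Even y b D d)" "open Ob" "y \<in> Ob"
  obtains s where "step (Even y b D d) s" "valid s" "pt s \<in> Ob"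
proof -
  from assms(1) have y: "y \<in> K" "D \<le> lo" "ereal (lo - D) < pos_osc K \<phi> b y"
    "pos_osc K \<phi> b y < ereal (hi - D)" by auto
  obtain N0 where N0: "open N0" "y \<in> N0" "\<And>w. w \<in> N0 \<Longrightarrow> pos_osc K \<phi> b w < ereal (hi - D)"
    using pos_osc_upper_semicontinuous[OF y(4)] by blast
  define N where "N = N0 \<inter> Ob"
  have N: "open N" "y \<in> N" using N0 assms(2,3) unfolding N_def by auto
  obtain c z where "c < b" and z: "z \<in> N \<inter> K"
    and gain_gt: "ereal (lo - D) < usc_env K (osc_gain K \<phi> c z) z"
    and gain_le: "usc_env K (osc_gain K \<phi> c z) z \<le> pos_osc K \<phi> b z"
    and c_small: "\<And>w. w \<in> N \<Longrightarrow> pos_osc K \<phi> c w \<le> ereal (lo - D)"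
    using pos_osc_gt_least_successor[of "lo - D" N y K \<phi> b] N y by auto
  have "usc_env K (osc_gain K \<phi> c z) z < ereal (hi - D)"
    using gain_le N0(3) z unfolding N_def by (blast intro: le_less_trans)
  then obtain \<kappa> P0 where "0 < \<kappa>" "ereal (lo - D + \<kappa>) < usc_env K (osc_gain K \<phi> c z) z"
    "open P0" "z \<in> P0" and P0: "\<And>w. w \<in> P0 \<inter> K \<Longrightarrow> osc_gain K \<phi> c z w < ereal (hi - D)"
    using usc_env_between[OF gain_gt] by blast
  moreover have "\<kappa> < \<phi> w - \<phi> z"
    if "w \<in> P0 \<inter> N \<inter> K" "ereal (lo - D + \<kappa>) < osc_gain K \<phi> c z w" for w
    using that c_small[of w] unfolding osc_gain_def by (cases "pos_osc K \<phi> c w") auto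
  ultimately have "valid (Odd z c \<kappa> D (P0 \<inter> N))"
    using z N(1) P0 by auto
  moreover have "step (Even y b D d) (Odd z c \<kappa> D (P0 \<inter> N))" using \<open>c < b\<close> by simp
  moreover have "pt (Odd z c \<kappa> D (P0 \<inter> N)) \<in> Ob" using z unfolding N_def by simp
  ultimately show thesis using that by blast
qed

lemma step_from_Odd:
  fixes b :: "'o::wellorder"
  assumes "valid (Odd z b \<kappa> D P)" "open Ob" "z \<in> Ob"
  obtains s where "step (Odd z b \<kappa> D P) s" "valid s" "pt s \<in> Ob"
proof -
  from assms(1) have z: "0 < \<kappa>" "open P" "z \<in> P"
    "ereal (lo - D + \<kappa>) < usc_env K (osc_gain K \<phi> b z) z"
    "\<forall>y\<in>P \<inter> K. ereal (lo - D + \<kappa>) < osc_gain K \<phi> b z y \<longrightarrow> \<kappa> < \<phi> y - \<phi> z"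
    "\<forall>w\<in>P \<inter> K. osc_gain K \<phi> b z w < ereal (hi - D)" by auto
  obtain y where y: "y \<in> Ob \<inter> P \<inter> K" "ereal (lo - D + \<kappa>) < osc_gain K \<phi> b z y"
    using less_usc_envE[OF z(4), of "Ob \<inter> P"] z(2,3) assms(2,3) by blast
  define d where "d = \<phi> y - \<phi> z"
  have "\<kappa> < d" using z(5) y unfolding d_def by auto
  have "0 \<le> pos_osc K \<phi> b y" using pos_osc_nonneg y(1) by blast
  moreover have "ereal d + pos_osc K \<phi> b y < ereal (hi - D)"
    using z(6) y(1) unfolding d_def osc_gain_def by auto
  moreover have "ereal (lo - D + \<kappa>) < ereal d + pos_osc K \<phi> b y"
    using y(2) unfolding d_def osc_gain_def .
  ultimately have bounds: "D + d < hi" "ereal (lo - (D + d)) < pos_osc K \<phi> b y"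
    "pos_osc K \<phi> b y < ereal (hi - (D + d))"
    using \<open>0 < \<kappa>\<close> by (cases "pos_osc K \<phi> b y"; simp)+
  show thesis
  proof (cases "lo < D + d")
    case True
    then show thesis
      using that[of "Stop y d (D + d)"] bounds y(1) \<open>0 < \<kappa>\<close> \<open>\<kappa> < d\<close> unfolding d_def by auto
  next
    case False
    then show thesis
      using that[of "Even y b (D + d) d"] bounds y(1) \<open>0 < \<kappa>\<close> \<open>\<kappa> < d\<close> unfolding d_def by auto
  qed
qed

lemma step_exists:
  fixes s :: "('a, 'o::wellorder) game_state"
  assumes "valid s" "open Ob" "pt s \<in> Ob"
  shows "\<exists>s'. step s s' \<and> valid s' \<and> pt s' \<in> Ob"
proof (cases s)
  case (Even y b D d)
  with assms show ?thesis by (metis game_state.sel(1) step_from_Even)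
next
  case (Odd z b \<kappa> D P)
  with assms show ?thesis by (metis game_state.sel(2) step_from_Odd)
next
  case (Stop t d D)
  with assms show ?thesis by auto
qed

lemma round_from_Even:
  fixes s0 :: "('a, 'o::wellorder) game_state"
  assumes "is_Even s0" "step s0 s1" "step s1 s2"
  shows "is_Odd s1" "is_Even s2 \<or> is_Stop s2" "is_Even s2 \<Longrightarrow> stage s2 < stage s0"
    "jump s2 = \<phi> (pt s2) - \<phi> (pt s1)" "margin s1 < jump s2" "acc s2 = acc s0 + jump s2"
  using assms by (cases s0; cases s1; cases s2; auto)+

lemma play_stops:
  fixes s :: "nat \<Rightarrow> ('a, 'o::wellorder) game_state"
  assumes "is_Even (s 0)" "\<And>j. step (s j) (s (Suc j))"
  obtains k where "0 < k" "\<And>p. p < k \<Longrightarrow> is_Even (s (2 * p))" "is_Stop (s (2 * k))"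
proof -
  note round = round_from_Even[OF _ assms(2) assms(2)]
  have "\<exists>p. \<not> is_Even (s (2 * p))"
  proof (rule ccontr)
    assume "\<not> ?thesis"
    then have Even: "is_Even (s (2 * p))" for p by blast
    have "stage (s (2 * Suc p)) < stage (s (2 * p))" for p
      using round(3)[OF Even[of p]] Even[of "Suc p"] by simp
    then show False
      using wf_no_infinite_down_chainE[OF wf, of "\<lambda>p. stage (s (2 * p))"] by auto
  qed
  define k where "k = (LEAST p. \<not> is_Even (s (2 * p)))"
  have Even_below: "is_Even (s (2 * p))" if "p < k" for p
    using not_less_Least[OF that[unfolded k_def]] by simp
  have "\<not> is_Even (s (2 * k))"
    unfolding k_def by (rule LeastI_ex) fact
  moreover from this have "0 < k" using assms(1) by (cases k) auto
  moreover have "is_Even (s (2 * k)) \<or> is_Stop (s (2 * k))"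
    using round(2)[OF Even_below[of "k - 1"]] \<open>0 < k\<close> by (cases k) auto
  ultimately show thesis using that Even_below by blast
qed

lemma play_outcome:
  fixes s :: "nat \<Rightarrow> ('a, 'o::wellorder) game_state"
  assumes "is_Even (s 0)" "acc (s 0) = 0" "\<And>j. step (s j) (s (Suc j))" "\<And>j. valid (s j)"
  obtains k where "0 < k" "\<And>p. p < k \<Longrightarrow> is_Even (s (2 * p))" "is_Stop (s (2 * k))"
    "\<And>p. p < k \<Longrightarrow> is_Odd (s (2 * p + 1))"
    "\<And>p. p < k \<Longrightarrow> jump (s (2 * p + 2)) = \<phi> (pt (s (2 * p + 2))) - \<phi> (pt (s (2 * p + 1)))"
    "\<And>p. p < k \<Longrightarrow> 0 < margin (s (2 * p + 1)) \<and> margin (s (2 * p + 1)) < jump (s (2 * p + 2))"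
    "lo < (\<Sum>p=1..k. jump (s (2 * p)))" "(\<Sum>p=1..k. jump (s (2 * p))) < hi"
proof -
  obtain k where k: "0 < k" "\<And>p. p < k \<Longrightarrow> is_Even (s (2 * p))" "is_Stop (s (2 * k))"
    using play_stops[OF assms(1,3)] by blast
  note round = round_from_Even[OF k(2) assms(3) assms(3)]
  have "acc (s (2 * p)) = (\<Sum>q=1..p. jump (s (2 * q)))" if "p \<le> k" for p
    using that
  proof (induction p)
    case (Suc p)
    then show ?case using round(6)[of p] by simp
  qed (simp add: assms(2))
  with valid_Stop_acc[OF assms(4) k(3)]
  have "lo < (\<Sum>p=1..k. jump (s (2 * p)))" "(\<Sum>p=1..k. jump (s (2 * p))) < hi" by auto
  with k round(1,4,5) valid_margin[OF assms(4)] show thesis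
    using that by simp
qed

end

section \<open>Diagonal subsequences and geometric sums\<close>

lemma diagonal_subsequence:
  fixes P :: "(nat \<Rightarrow> nat) \<Rightarrow> nat \<Rightarrow> nat \<Rightarrow> bool"
  assumes ev: "\<And>r n. eventually (P r n) sequentially"
    and prefix: "\<And>r r' n. (\<And>i. i < n \<Longrightarrow> r i = r' i) \<Longrightarrow> P r n = P r' n"
  obtains r where "strict_mono r" "\<And>n. P r n (r n)"
proof -
  define pick where "pick n q = (SOME j. q (n - 1) < j \<and> P q n j)" for n q
  have pick: "q (n - 1) < pick n q \<and> P q n (pick n q)" for n q
  proof -
    have "eventually (\<lambda>j. q (n - 1) < j \<and> P q n j) sequentially"
      using eventually_gt_at_top ev by (rule eventually_conj)
    then have "\<exists>j. q (n - 1) < j \<and> P q n j"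
      unfolding eventually_sequentially by blast
    then show ?thesis
      unfolding pick_def by (rule someI_ex)
  qed
  define R where "R = rec_nat (\<lambda>_. 0) (\<lambda>n q. q(n := pick n q))"
  have R_Suc: "R (Suc n) = (R n)(n := pick n (R n))" for n
    unfolding R_def by simp
  define r where "r n = R (Suc n) n" for n
  have R_prefix: "R n i = r i" if "i < n" for n i
    using that by (induction n) (auto simp: R_Suc r_def)
  have r_eq: "r n = pick n (R n)" for n
    by (simp add: r_def R_Suc)
  show thesis
  proof
    show "strict_mono r"
      unfolding strict_mono_Suc_iff using pick R_prefix r_eq by (metis diff_Suc_1 lessI)
    show "P r n (r n)" for n
      using pick[of "R n" n] prefix[of n "R n" r] R_prefix by (simp add: r_eq)
  qed
qed

lemma continuous_on_less_nhd:
  assumes "continuous_on K h" "p \<in> K" "h p < (\<theta>::real)"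
  shows "\<exists>V. open V \<and> p \<in> V \<and> (\<forall>w\<in>V \<inter> K. h w < \<theta>)"
proof -
  obtain V where "open V" "V \<inter> K = h -` {..<\<theta>} \<inter> K"
    using assms(1) unfolding continuous_on_open_invariant by (meson open_lessThan)
  with assms(2,3) show ?thesis by blast
qed

lemma sum_half_powers_le: "1 \<le> a \<Longrightarrow> (\<Sum>i\<in>{a..<b}. (1/2::real) ^ i) \<le> 1"
proof -
  assume "1 \<le> a"
  then have "(\<Sum>i\<in>{a..<b}. (1/2::real) ^ i) \<le> (\<Sum>i\<in>{1..<b}. (1/2) ^ i)"
    by (intro sum_mono2) auto
  also have "\<dots> \<le> 1"
  proof (cases b)
    case (Suc b')
    then have "{..<b} = insert 0 {1..<b}" by auto
    then have "(\<Sum>i\<in>{1..<b}. (1/2::real) ^ i) = (\<Sum>i<b. (1/2) ^ i) - 1" by simp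
    then show ?thesis unfolding sum_gp_strict by simp
  qed simp
  finally show ?thesis .
qed

lemma sum_norm_triangle_half_powers:
  fixes u v :: "nat \<Rightarrow> 'b::real_normed_vector"
  assumes "(\<Sum>i\<in>{a..<b}. norm (u i - v i)) < \<theta>"
    and "\<And>i. i \<in> {a..<b} \<Longrightarrow> norm (v i - c) < \<theta> / 2 ^ i" and "1 \<le> a"
  shows "(\<Sum>i\<in>{a..<b}. norm (u i - c)) < 2 * \<theta>"
proof -
  have "0 < \<theta>" using assms(1) sum_nonneg[of "{a..<b}" "\<lambda>i. norm (u i - v i)"] by simp
  have "(\<Sum>i\<in>{a..<b}. norm (u i - c)) \<le> (\<Sum>i\<in>{a..<b}. norm (u i - v i) + norm (v i - c))"
    by (intro sum_mono norm_diff_triangle_le) auto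
  also have "\<dots> = (\<Sum>i\<in>{a..<b}. norm (u i - v i)) + (\<Sum>i\<in>{a..<b}. norm (v i - c))"
    by (rule sum.distrib)
  also have "(\<Sum>i\<in>{a..<b}. norm (v i - c)) \<le> (\<Sum>i\<in>{a..<b}. \<theta> * (1/2) ^ i)"
    using assms(2) by (intro sum_mono) (auto simp: power_one_over less_imp_le)
  also have "\<dots> \<le> \<theta>"
    using sum_half_powers_le[OF assms(3)] \<open>0 < \<theta>\<close>
    by (simp add: sum_distrib_left[symmetric] mult_left_le)
  finally show ?thesis using assms(1) by simp
qed

lemma suminf_norm_half_powers:
  fixes u :: "nat \<Rightarrow> 'b::real_normed_vector"
  assumes "\<And>i. n \<le> i \<Longrightarrow> norm (u i - c) < \<theta> / 2 ^ i" and "1 \<le> n"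
  shows "summable (\<lambda>i. norm (u (i + n) - c))" "(\<Sum>i. norm (u (i + n) - c)) \<le> \<theta>"
proof -
  have bound: "norm (u (i + n) - c) \<le> \<theta> / 2 * (1/2) ^ i" for i
  proof -
    have "0 < \<theta> / 2 ^ n" using assms(1)[of n] norm_ge_zero[of "u n - c"] by linarith
    then have "0 < \<theta>" by (simp add: zero_less_divide_iff)
    have "norm (u (i + n) - c) < \<theta> / 2 ^ (i + n)" using assms(1) by simp
    also have "\<dots> \<le> \<theta> / 2 ^ Suc i"
      using \<open>0 < \<theta>\<close> assms(2) by (intro divide_left_mono power_increasing) auto
    finally show ?thesis by (simp add: power_one_over)
  qed
  have geom: "summable (\<lambda>i. \<theta> / 2 * (1/2::real) ^ i)"
    by (intro summable_mult summable_geometric) simp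
  show "summable (\<lambda>i. norm (u (i + n) - c))"
    by (rule summable_comparison_test[OF _ geom]) (use bound in auto)
  then have "(\<Sum>i. norm (u (i + n) - c)) \<le> (\<Sum>i. \<theta> / 2 * (1/2::real) ^ i)"
    by (rule suminf_le[OF bound _ geom])
  also have "\<dots> = \<theta>"
    using suminf_mult[OF summable_geometric[of "1/2::real"], of "\<theta> / 2"] suminf_geometric[of "1/2::real"]
    by simp
  finally show "(\<Sum>i. norm (u (i + n) - c)) \<le> \<theta>" .
qed

section \<open>Playing against the block endpoints\<close>

locale osc_approx = osc_game K \<phi> lo hi
  for K :: "'a::metric_space set" and \<phi> lo hi +
  fixes f :: "nat \<Rightarrow> 'a \<Rightarrow> 'b::real_normed_vector" and g :: "'a \<Rightarrow> 'b"
    and \<alpha> :: "'o::wellorder" and x :: 'a and U :: "'a set" and \<eta> :: real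
  assumes continuous: "\<And>j. continuous_on K (f j)"
    and converges: "\<And>y. y \<in> K \<Longrightarrow> (\<lambda>j. f j y) \<longlonglongrightarrow> g y"
    and x: "x \<in> K" "x \<in> U" and open_U: "open U"
    and lo_hi: "0 \<le> lo" "ereal lo < pos_osc K \<phi> \<alpha> x" "pos_osc K \<phi> \<alpha> x < ereal hi"
    and \<eta>: "0 < \<eta>"
begin

definition tol :: "('a, 'o) game_state \<Rightarrow> real" where
  "tol s = \<eta> * (if is_Odd s then margin s else jump s) / 2"

lemma tol_pos: "valid s \<Longrightarrow> 0 < tol s"
  using \<eta> by (cases s) (auto simp: tol_def)

definition block_nbhd :: "(nat \<Rightarrow> nat) \<Rightarrow> 'a \<Rightarrow> nat \<Rightarrow> nat \<Rightarrow> real \<Rightarrow> 'a set" where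
  "block_nbhd r p a b \<theta> = (SOME V. open V \<and> p \<in> V \<and>
     (\<forall>w\<in>V \<inter> K. (\<Sum>i\<in>{a..<b}. norm (f (r i) w - f (r i) p)) < \<theta>))"

lemma block_nbhd_spec:
  assumes "p \<in> K" "0 < \<theta>"
  shows "open (block_nbhd r p a b \<theta>) \<and> p \<in> block_nbhd r p a b \<theta> \<and>
    (\<forall>w\<in>block_nbhd r p a b \<theta> \<inter> K. (\<Sum>i\<in>{a..<b}. norm (f (r i) w - f (r i) p)) < \<theta>)"
proof -
  have "continuous_on K (\<lambda>w. \<Sum>i\<in>{a..<b}. norm (f (r i) w - f (r i) p))"
    by (intro continuous_intros continuous)
  moreover note assms(1)
  moreover have "(\<Sum>i\<in>{a..<b}. norm (f (r i) p - f (r i) p)) < \<theta>" using assms(2) by simp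
  ultimately have "\<exists>V. open V \<and> p \<in> V \<and> (\<forall>w\<in>V \<inter> K. (\<Sum>i\<in>{a..<b}. norm (f (r i) w - f (r i) p)) < \<theta>)"
    by (rule continuous_on_less_nhd)
  then show ?thesis unfolding block_nbhd_def by (rule someI_ex)
qed

lemma block_nbhd_cong:
  assumes "b \<le> n" "\<And>i. i < n \<Longrightarrow> r i = r' i"
  shows "block_nbhd r p a b \<theta> = block_nbhd r' p a b \<theta>"
proof -
  have "(\<Sum>i\<in>{a..<b}. norm (f (r i) w - f (r i) p)) = (\<Sum>i\<in>{a..<b}. norm (f (r' i) w - f (r' i) p))"
    for w using assms by (intro sum.cong) auto
  then show ?thesis unfolding block_nbhd_def by simp
qed

definition move :: "('a, 'o) game_state \<Rightarrow> 'a set \<Rightarrow> ('a, 'o) game_state" where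
  "move s W = (SOME s'. step s s' \<and> valid s' \<and> pt s' \<in> W)"

lemma move_step: "valid s \<Longrightarrow> open W \<Longrightarrow> pt s \<in> W \<Longrightarrow> step s (move s W) \<and> valid (move s W) \<and> pt (move s W) \<in> W"
  unfolding move_def by (rule someI_ex) (rule step_exists)

text \<open>The block endpoints are listed latest first. The jump 1 of the initial position is a
  dummy: its block {1..<m 1} is empty.\<close>
fun play :: "(nat \<Rightarrow> nat) \<Rightarrow> nat list \<Rightarrow> 'a set \<times> nat \<times> ('a, 'o) game_state" where
  "play r [] = (U, 1, Even x \<alpha> 0 1)"
| "play r (b # bs) = (case play r bs of (W, a, s) \<Rightarrow>
     let W' = W \<inter> block_nbhd r (pt s) a b (tol s) in (W', b, move s W'))"

lemma valid_start: "valid (Even x \<alpha> 0 1)"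
  using x lo_hi by simp

lemma play_valid: "play r bs = (W, a, s) \<Longrightarrow> open W \<and> W \<subseteq> U \<and> pt s \<in> W \<and> valid s"
proof (induction bs arbitrary: W a s)
  case Nil
  then show ?case using open_U x valid_start by auto
next
  case (Cons b bs)
  obtain W0 a0 s0 where play0: "play r bs = (W0, a0, s0)" by (metis prod_cases3)
  with Cons.IH have IH: "open W0" "W0 \<subseteq> U" "pt s0 \<in> W0" "valid s0" by auto
  define W' where "W' = W0 \<inter> block_nbhd r (pt s0) a0 b (tol s0)"
  have W': "open W'" "W' \<subseteq> U" "pt s0 \<in> W'"
    using IH block_nbhd_spec[OF valid_pt[OF IH(4)] tol_pos[OF IH(4)], of r a0 b] unfolding W'_def by auto
  have "W = W'" "s = move s0 W'" using Cons.prems play0 by (auto simp: W'_def Let_def)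
  with W' move_step[OF IH(4) W'(1,3)] show ?case by simp
qed

lemma play_cong:
  assumes "\<And>i. i < n \<Longrightarrow> r i = r' i"
  shows "set bs \<subseteq> {..n} \<Longrightarrow> play r bs = play r' bs"
proof (induction bs)
  case (Cons b bs)
  then have "play r bs = play r' bs" "b \<le> n" by auto
  moreover obtain W a s where "play r' bs = (W, a, s)" by (metis prod_cases3)
  ultimately show ?case using block_nbhd_cong[OF \<open>b \<le> n\<close> assms] by (simp add: Let_def)
qed simp

text \<open>Finitely many positions, depending only on r below n: this makes the diagonal choice work.\<close>
definition checkpoints :: "(nat \<Rightarrow> nat) \<Rightarrow> nat \<Rightarrow> ('a, 'o) game_state set" where
  "checkpoints r n = (\<lambda>bs. snd (snd (play r bs))) ` {bs. set bs \<subseteq> {..n} \<and> length bs \<le> n}"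

lemma finite_checkpoints: "finite (checkpoints r n)"
  unfolding checkpoints_def by (intro finite_imageI finite_lists_length_le) auto

lemma checkpoints_mono: "n \<le> n' \<Longrightarrow> checkpoints r n \<subseteq> checkpoints r n'"
  unfolding checkpoints_def by (intro image_mono) auto

lemma checkpoints_valid:
  assumes "s \<in> checkpoints r n"
  shows "valid s"
proof -
  from assms obtain bs where "s = snd (snd (play r bs))" unfolding checkpoints_def by blast
  then show ?thesis using play_valid[of r bs "fst (play r bs)" "fst (snd (play r bs))" s] by simp
qed

definition approximating :: "(nat \<Rightarrow> nat) \<Rightarrow> bool" where
  "approximating r \<longleftrightarrow> (\<forall>n i s. s \<in> checkpoints r n \<longrightarrow> n \<le> i \<longrightarrow>
     norm (f (r i) (pt s) - g (pt s)) < tol s / 2 ^ i)"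

lemma approximating_subsequence:
  obtains r where "strict_mono r" "approximating r"
proof -
  define P where "P r n j \<longleftrightarrow> (\<forall>s\<in>checkpoints r n. norm (f j (pt s) - g (pt s)) < tol s / 2 ^ n)"
    for r n j
  have ev: "eventually (P r n) sequentially" for r n
  proof -
    have "eventually (\<lambda>j. norm (f j (pt s) - g (pt s)) < tol s / 2 ^ n) sequentially"
      if "s \<in> checkpoints r n" for s
    proof -
      have "valid s" using checkpoints_valid[OF that] .
      then have "0 < tol s / 2 ^ n" using tol_pos by simp
      with converges[OF valid_pt[OF \<open>valid s\<close>]] show ?thesis
        unfolding tendsto_iff dist_norm by blast
    qed
    then show ?thesis
      unfolding P_def using finite_checkpoints by (simp add: eventually_ball_finite)
  qed
  have prefix: "P r n = P r' n" if "\<And>i. i < n \<Longrightarrow> r i = r' i" for r r' n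
  proof -
    have "checkpoints r n = checkpoints r' n"
      unfolding checkpoints_def using play_cong[OF that] by (intro image_cong) auto
    then show ?thesis unfolding P_def by simp
  qed
  obtain r where "strict_mono r" "\<And>n. P r n (r n)"
    using diagonal_subsequence[of P, OF ev prefix] by blast
  moreover have "approximating r"
    using \<open>\<And>n. P r n (r n)\<close> checkpoints_mono unfolding approximating_def P_def by blast
  ultimately show thesis using that by blast
qed

definition endpoints :: "(nat \<Rightarrow> nat) \<Rightarrow> nat \<Rightarrow> nat list" where
  "endpoints m j = rev (map m [1..<Suc j])"

definition region :: "(nat \<Rightarrow> nat) \<Rightarrow> (nat \<Rightarrow> nat) \<Rightarrow> nat \<Rightarrow> 'a set" where
  "region r m j = fst (play r (endpoints m j))"

definition state :: "(nat \<Rightarrow> nat) \<Rightarrow> (nat \<Rightarrow> nat) \<Rightarrow> nat \<Rightarrow> ('a, 'o) game_state" where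
  "state r m j = snd (snd (play r (endpoints m j)))"

lemma play_endpoints: "play r (endpoints m j) = (region r m j, if j = 0 then 1 else m j, state r m j)"
proof -
  have "fst (snd (play r (endpoints m j))) = (if j = 0 then 1 else m j)"
    by (cases j) (auto simp: endpoints_def Let_def split: prod.split)
  then show ?thesis unfolding region_def state_def by (simp add: prod_eq_iff)
qed

lemma state_0: "state r m 0 = Even x \<alpha> 0 1"
  by (simp add: state_def endpoints_def)

lemma state_valid:
  "open (region r m j) \<and> region r m j \<subseteq> U \<and> pt (state r m j) \<in> region r m j \<and> valid (state r m j)"
  using play_valid[OF play_endpoints] .

lemma region_Suc:
  "region r m (Suc j) = region r m j \<inter>
     block_nbhd r (pt (state r m j)) (if j = 0 then 1 else m j) (m (Suc j)) (tol (state r m j))"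
  and state_Suc: "state r m (Suc j) = move (state r m j) (region r m (Suc j))"
proof -
  have "endpoints m (Suc j) = m (Suc j) # endpoints m j" by (simp add: endpoints_def)
  then have "play r (endpoints m (Suc j)) = (let W' = region r m j \<inter>
      block_nbhd r (pt (state r m j)) (if j = 0 then 1 else m j) (m (Suc j)) (tol (state r m j))
      in (W', m (Suc j), move (state r m j) W'))"
    by (simp add: play_endpoints)
  then show "region r m (Suc j) = region r m j \<inter>
     block_nbhd r (pt (state r m j)) (if j = 0 then 1 else m j) (m (Suc j)) (tol (state r m j))"
    and "state r m (Suc j) = move (state r m j) (region r m (Suc j))"
    unfolding region_def state_def by (simp_all add: Let_def)
qed

lemma
  shows state_step: "step (state r m j) (state r m (Suc j))"
    and region_block: "1 \<le> j \<Longrightarrow> w \<in> region r m (Suc j) \<inter> K \<Longrightarrow>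
      (\<Sum>i\<in>{m j..<m (Suc j)}. norm (f (r i) w - f (r i) (pt (state r m j)))) < tol (state r m j)"
proof -
  have valid: "valid (state r m j)" using state_valid by blast
  note nbhd = block_nbhd_spec[OF valid_pt[OF valid] tol_pos[OF valid],
      of r "if j = 0 then 1 else m j" "m (Suc j)"]
  have "open (region r m (Suc j))" "pt (state r m j) \<in> region r m (Suc j)"
    using nbhd state_valid[of r m j] unfolding region_Suc by auto
  from move_step[OF valid this] show "step (state r m j) (state r m (Suc j))"
    unfolding state_Suc by blast
  show "(\<Sum>i\<in>{m j..<m (Suc j)}. norm (f (r i) w - f (r i) (pt (state r m j)))) < tol (state r m j)"
    if "1 \<le> j" "w \<in> region r m (Suc j) \<inter> K"
    using nbhd that unfolding region_Suc by auto
qed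

lemma region_antimono: "j \<le> j' \<Longrightarrow> region r m j' \<subseteq> region r m j"
  by (rule lift_Suc_antimono_le[of "region r m"]) (auto simp: region_Suc)

lemma increasing_from_1:
  fixes m :: "nat \<Rightarrow> nat"
  assumes "m 1 = 1" "\<forall>j\<ge>1. m j < m (Suc j)" "1 \<le> i"
  shows "i \<le> j \<Longrightarrow> m i \<le> m j" and "i \<le> m i"
proof -
  show "i \<le> j \<Longrightarrow> m i \<le> m j"
    by (induction j rule: dec_induct) (use assms(2,3) in \<open>auto intro: order.trans\<close>)
  show "i \<le> m i"
    using assms(3) by (induction i rule: dec_induct) (use assms(1,2) in \<open>auto simp: Suc_le_eq intro: le_less_trans\<close>)
qed

lemma state_in_checkpoints:
  assumes "m 1 = 1" "\<forall>j\<ge>1. m j < m (Suc j)" "1 \<le> j"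
  shows "state r m j \<in> checkpoints r (m j)"
proof -
  have "set (endpoints m j) \<subseteq> {..m j}" "length (endpoints m j) \<le> m j"
    using increasing_from_1[OF assms(1,2)] assms(3) by (auto simp: endpoints_def)
  then show ?thesis unfolding checkpoints_def state_def by blast
qed

lemma block_estimate:
  assumes "approximating r" "m 1 = 1" "\<forall>j\<ge>1. m j < m (Suc j)" "1 \<le> j" "j < J"
  shows "(\<Sum>i\<in>{m j..<m (Suc j)}. norm (f (r i) (pt (state r m J)) - g (pt (state r m j))))
    < 2 * tol (state r m j)"
proof (rule sum_norm_triangle_half_powers)
  have "pt (state r m J) \<in> region r m (Suc j) \<inter> K"
    using region_antimono[of "Suc j" J r m] state_valid[of r m J] valid_pt \<open>j < J\<close> by auto
  then show "(\<Sum>i\<in>{m j..<m (Suc j)}. norm (f (r i) (pt (state r m J)) - f (r i) (pt (state r m j))))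
    < tol (state r m j)"
    by (rule region_block[OF assms(4)])
  show "norm (f (r i) (pt (state r m j)) - g (pt (state r m j))) < tol (state r m j) / 2 ^ i"
    if "i \<in> {m j..<m (Suc j)}" for i
    using assms(1) state_in_checkpoints[OF assms(2-4)] that unfolding approximating_def by auto
  show "1 \<le> m j"
    using increasing_from_1(1)[OF assms(2,3), of 1 j] assms(2,4) by simp
qed

lemma tail_estimate:
  assumes "approximating r" "m 1 = 1" "\<forall>j\<ge>1. m j < m (Suc j)" "1 \<le> J"
  defines "t \<equiv> pt (state r m J)"
  shows "summable (\<lambda>i. norm (f (r (i + m J)) t - g t))"
    and "(\<Sum>i. norm (f (r (i + m J)) t - g t)) \<le> tol (state r m J)"
proof -
  have bound: "norm (f (r i) t - g t) < tol (state r m J) / 2 ^ i" if "m J \<le> i" for i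
    using assms(1) state_in_checkpoints[OF assms(2-4)] that unfolding approximating_def t_def by auto
  have "1 \<le> m J"
    using increasing_from_1(1)[OF assms(2,3), of 1 J] assms(2,4) by simp
  from suminf_norm_half_powers[where u = "\<lambda>i. f (r i) t", OF bound this]
  show "summable (\<lambda>i. norm (f (r (i + m J)) t - g t))"
    and "(\<Sum>i. norm (f (r (i + m J)) t - g t)) \<le> tol (state r m J)" by simp_all
qed

lemma tol_le_jump:
  fixes s :: "nat \<Rightarrow> ('a, 'o) game_state" and j :: nat
  assumes "\<And>p. p < k \<Longrightarrow> is_Even (s (2 * p))" "\<And>p. p < k \<Longrightarrow> is_Odd (s (2 * p + 1))"
    "\<And>p. p < k \<Longrightarrow> 0 < margin (s (2 * p + 1)) \<and> margin (s (2 * p + 1)) < jump (s (2 * p + 2))"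
    "j \<in> {1..2*k-1}"
  shows "2 * tol (s j) \<le> \<eta> * jump (s (2 * ((j + 1) div 2)))"
proof (cases "even j")
  case True
  then obtain p where "j = 2 * p" "p < k" using assms(4) by (auto elim: evenE)
  with assms(1)[of p] show ?thesis by (cases "s j") (auto simp: tol_def)
next
  case False
  then obtain p where "j = 2 * p + 1" "p < k" using assms(4) by (auto elim: oddE)
  with assms(2,3)[of p] \<eta> show ?thesis by (cases "s j") (auto simp: tol_def)
qed

lemma approximating_play:
  assumes "approximating r" and m: "m 1 = 1" "\<forall>j\<ge>1. m j < m (Suc j)"
  shows "\<exists>k\<ge>1. \<exists>xs \<delta>. (\<forall>i\<in>{1..2*k}. xs i \<in> U \<inter> K) \<and> (\<forall>j\<in>{1..k}. 0 < \<delta> j) \<and>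
    (\<forall>j\<in>{1..k}. \<phi> (xs (2*j)) - \<phi> (xs (2*j - 1)) > (1 - \<eta>) * \<delta> j) \<and>
    hi > (\<Sum>j=1..k. \<delta> j) \<and> (\<Sum>j=1..k. \<delta> j) > lo \<and>
    (\<forall>j\<in>{1..2*k-1}. (\<Sum>i\<in>{m j..<m (Suc j)}. norm (f (r i) (xs (2*k)) - g (xs j)))
       < \<eta> * \<delta> ((j + 1) div 2)) \<and>
    summable (\<lambda>i. norm (f (r (i + m (2*k))) (xs (2*k)) - g (xs (2*k)))) \<and>
    (\<Sum>i. norm (f (r (i + m (2*k))) (xs (2*k)) - g (xs (2*k)))) < \<eta> * \<delta> k"
proof -
  define s where "s = state r m"
  have steps: "step (s j) (s (Suc j))" and valid: "valid (s j)" for j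
    using state_step state_valid unfolding s_def by blast+
  have "s 0 = Even x \<alpha> 0 1" unfolding s_def state_0 ..
  then obtain k where "0 < k" and Even: "\<And>p. p < k \<Longrightarrow> is_Even (s (2 * p))"
    and Stop: "is_Stop (s (2 * k))" and Odd: "\<And>p. p < k \<Longrightarrow> is_Odd (s (2 * p + 1))"
    and jump: "\<And>p. p < k \<Longrightarrow> jump (s (2 * p + 2)) = \<phi> (pt (s (2 * p + 2))) - \<phi> (pt (s (2 * p + 1)))"
    and margin: "\<And>p. p < k \<Longrightarrow> 0 < margin (s (2 * p + 1)) \<and> margin (s (2 * p + 1)) < jump (s (2 * p + 2))"
    and sum: "lo < (\<Sum>p=1..k. jump (s (2 * p)))" "(\<Sum>p=1..k. jump (s (2 * p))) < hi"
    using play_outcome[of s] steps valid by auto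
  define \<delta> where "\<delta> p = jump (s (2 * p))" for p
  have \<delta>_pos: "0 < \<delta> p" if "p \<in> {1..k}" for p
    using margin[of "p - 1"] that unfolding \<delta>_def by (cases p) auto
  show ?thesis
  proof (intro exI[of _ k] exI[of _ "\<lambda>j. pt (s j)"] exI[of _ \<delta>] conjI)
    show "\<forall>i\<in>{1..2*k}. pt (s i) \<in> U \<inter> K"
      using state_valid valid_pt unfolding s_def by blast
    show "\<forall>j\<in>{1..k}. \<phi> (pt (s (2*j))) - \<phi> (pt (s (2*j - 1))) > (1 - \<eta>) * \<delta> j"
    proof
      fix j assume "j \<in> {1..k}"
      then obtain p where "j = p + 1" "p < k" by (cases j) auto
      with jump[of p] \<delta>_pos[OF \<open>j \<in> {1..k}\<close>] \<eta>
      show "\<phi> (pt (s (2*j))) - \<phi> (pt (s (2*j - 1))) > (1 - \<eta>) * \<delta> j" by (simp add: \<delta>_def)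
    qed
    show "\<forall>j\<in>{1..2*k-1}. (\<Sum>i\<in>{m j..<m (Suc j)}. norm (f (r i) (pt (s (2*k))) - g (pt (s j))))
       < \<eta> * \<delta> ((j + 1) div 2)"
    proof
      fix j assume j: "j \<in> {1..2*k-1}"
      then have "1 \<le> j" "j < 2 * k" by auto
      from block_estimate[OF assms this] tol_le_jump[OF Even Odd margin j]
      show "(\<Sum>i\<in>{m j..<m (Suc j)}. norm (f (r i) (pt (s (2*k))) - g (pt (s j))))
       < \<eta> * \<delta> ((j + 1) div 2)" unfolding s_def \<delta>_def by linarith
    qed
    have "tol (s (2 * k)) < \<eta> * \<delta> k"
      using Stop \<delta>_pos[of k] \<open>0 < k\<close> \<eta> by (cases "s (2 * k)") (auto simp: tol_def \<delta>_def)
    then show "(\<Sum>i. norm (f (r (i + m (2*k))) (pt (s (2*k))) - g (pt (s (2*k))))) < \<eta> * \<delta> k"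
      using tail_estimate(2)[OF assms, of "2 * k"] \<open>0 < k\<close> unfolding s_def by simp
    show "summable (\<lambda>i. norm (f (r (i + m (2*k))) (pt (s (2*k))) - g (pt (s (2*k)))))"
      using tail_estimate(1)[OF assms, of "2 * k"] \<open>0 < k\<close> unfolding s_def by simp
  qed (use \<open>0 < k\<close> \<delta>_pos sum in \<open>auto simp: \<delta>_def\<close>)
qed

end

theorem theorem3p3:
  fixes K :: "'a::metric_space set"
    and f :: "nat \<Rightarrow> 'a \<Rightarrow> complex"
    and g :: "'a \<Rightarrow> complex"
    and \<alpha> :: "'o::wellorder"
    and x :: 'a and U :: "'a set" and \<eta> :: real
  assumes "compact K"
    and "\<And>j. continuous_on K (f j)"
    and "\<exists>B. \<forall>j. \<forall>y\<in>K. norm (f j y) \<le> B"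
    and "\<And>y. y \<in> K \<Longrightarrow> (\<lambda>j. f j y) \<longlonglongrightarrow> g y"
    and "countable {\<beta>. \<beta> < \<alpha>}"
    and "x \<in> K"
    and "0 < pos_osc K (\<lambda>y. Re (g y)) \<alpha> x"
    and "pos_osc K (\<lambda>y. Re (g y)) \<alpha> x < \<infinity>"
    and "open U" and "x \<in> U"
    and "0 < \<eta>" and "\<eta> < 1"
  shows "\<exists>r::nat \<Rightarrow> nat. strict_mono r \<and>
    (\<forall>m::nat \<Rightarrow> nat. m 1 = 1 \<and> (\<forall>j\<ge>1. m j < m (Suc j)) \<longrightarrow>
      (\<exists>k::nat. k \<ge> 1 \<and> (\<exists>(xs::nat \<Rightarrow> 'a) (\<delta>::nat \<Rightarrow> real).
         (\<forall>i\<in>{1..2*k}. xs i \<in> U \<inter> K) \<and>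
         (\<forall>j\<in>{1..k}. 0 < \<delta> j) \<and>
         (\<forall>j\<in>{1..k}. Re (g (xs (2*j))) - Re (g (xs (2*j - 1))) > (1 - \<eta>) * \<delta> j) \<and>
         (1 + \<eta>) * real_of_ereal (pos_osc K (\<lambda>y. Re (g y)) \<alpha> x) > (\<Sum>j=1..k. \<delta> j) \<and>
         (\<Sum>j=1..k. \<delta> j) > (1 - \<eta>) * real_of_ereal (pos_osc K (\<lambda>y. Re (g y)) \<alpha> x) \<and>
         (\<forall>j\<in>{1..2*k-1}.
            (\<Sum>i\<in>{m j..<m (Suc j)}. norm (f (r i) (xs (2*k)) - g (xs j)))
              < \<eta> * \<delta> ((j + 1) div 2)) \<and>
         summable (\<lambda>i. norm (f (r (i + m (2*k))) (xs (2*k)) - g (xs (2*k)))) \<and>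
         (\<Sum>i. norm (f (r (i + m (2*k))) (xs (2*k)) - g (xs (2*k)))) < \<eta> * \<delta> k)))"
proof -
  have "ereal ((1 - \<eta>) * real_of_ereal (pos_osc K (\<lambda>y. Re (g y)) \<alpha> x)) < pos_osc K (\<lambda>y. Re (g y)) \<alpha> x"
    "pos_osc K (\<lambda>y. Re (g y)) \<alpha> x < ereal ((1 + \<eta>) * real_of_ereal (pos_osc K (\<lambda>y. Re (g y)) \<alpha> x))"
    using assms(7,8,11,12) by (cases "pos_osc K (\<lambda>y. Re (g y)) \<alpha> x"; simp)+
  then interpret osc_approx K "\<lambda>y. Re (g y)"
    "(1 - \<eta>) * real_of_ereal (pos_osc K (\<lambda>y. Re (g y)) \<alpha> x)"
    "(1 + \<eta>) * real_of_ereal (pos_osc K (\<lambda>y. Re (g y)) \<alpha> x)" f g \<alpha> x U \<eta>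
    using assms by unfold_locales (auto simp: real_of_ereal_pos)
  obtain r where "strict_mono r" "approximating r"
    by (rule approximating_subsequence)
  then show ?thesis
    using approximating_play by blast
qed

end
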